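(* Let $d\in\mathbb{N}$, let $x_1^*$ denote the smallest zero of the Legendre polynomial $P_{d+1}(x)$, and define $z^*=\arccos|x_1^*|$. If $z>z^*$, then there exists no design on the rectangle $[z,\pi-z]\times(-\pi,\pi]$ whose information matrix in the spherical harmonic regression model of degree $d$ equals $I_{(d+1)^2}$.
   Context: Spherical harmonic functions: for $n\in\mathbb{N}_0$, $Y_n^0(\theta,\phi)=\sqrt{2n+1}\,P_n(\cos\theta)$ with $P_n$ the $n$-th Legendre polynomial (orthogonal w.r.t. Lebesgue measure on $[-1,1]$, $P_n(1)=1$); for $1\le m\le n$, $Y_n^m(\theta,\phi)=\sqrt{2(2n+1)\frac{(n-m)!}{(n+m)!}}\,P_n^m(\cos\theta)\cos(m\phi)$ and $Y_n^{-m}(\theta,\phi)=\sqrt{2(2n+1)\frac{(n-m)!}{(n+m)!}}\,P_n^m(\cos\theta)\sin(m\phi)$, where $P_n^m(x)=(-1)^m(1-x^2)^{m/2}\frac{d^m}{dx^m}P_n(x)$. The spherical harmonic regression model of degree $d$ has regression vector $f_d=(Y_0^0,Y_1^{-1},Y_1^0,Y_1^1,\dots,Y_d^{-d},\dots,Y_d^d)^T\in\mathbb{R}^{(d+1)^2}$. A design is a probability measure $\xi$ on $[0,\pi]\times(-\pi,\pi]$ (a design on a subset means one supported in that subset), with information matrix $M(\xi)=\int f_df_d^T\,d\xi$. *)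

theory Defs
  imports "HOL-Analysis.Analysis" "HOL-Probability.Probability"
          "HOL-Computational_Algebra.Polynomial"
begin

definition legendre :: "nat \<Rightarrow> real poly" where
  "legendre n = smult (1 / (2 ^ n * fact n)) ((pderiv ^^ n) ([:-1, 0, 1:] ^ n))"

definition assoc_legendre :: "nat \<Rightarrow> nat \<Rightarrow> real \<Rightarrow> real" where
  "assoc_legendre n m x =
     (-1) ^ m * sqrt (1 - x\<^sup>2) ^ m * poly ((pderiv ^^ m) (legendre n)) x"

definition sph_harm :: "nat \<Rightarrow> int \<Rightarrow> real \<times> real \<Rightarrow> real" where
  "sph_harm n m p = (let \<theta> = fst p; \<phi> = snd p; k = nat \<bar>m\<bar> in
     if m = 0 then sqrt (2 * real n + 1) * poly (legendre n) (cos \<theta>)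
     else sqrt (2 * (2 * real n + 1) * fact (n - k) / fact (n + k))
          * assoc_legendre n k (cos \<theta>)
          * (if m > 0 then cos (real k * \<phi>) else sin (real k * \<phi>)))"

definition sh_index :: "nat \<Rightarrow> (nat \<times> int) set" where
  "sh_index d = {(n, m). n \<le> d \<and> \<bar>m\<bar> \<le> int n}"

definition info_matrix :: "(real \<times> real) measure \<Rightarrow> nat \<times> int \<Rightarrow> nat \<times> int \<Rightarrow> real" where
  "info_matrix \<xi> i j = (\<integral>p. sph_harm (fst i) (snd i) p * sph_harm (fst j) (snd j) p \<partial>\<xi>)"

definition design_on :: "(real \<times> real) set \<Rightarrow> (real \<times> real) measure \<Rightarrow> bool" where
  "design_on R \<xi> \<longleftrightarrow> prob_space \<xi> \<and> sets \<xi> = sets borel \<and> emeasure \<xi> (UNIV - R) = 0"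

definition smallest_zero :: "real poly \<Rightarrow> real" where
  "smallest_zero p = Min {x. poly p x = 0}"

end

theory Submission
  imports Defs
begin

text \<open>Only the zonal block of the information matrix matters. Its entries are the integrals of
  \<open>P\<^sub>k(cos \<theta>) P\<^sub>l(cos \<theta>)\<close>, so \<open>M(\<xi>) = I\<close> says that, for polynomials \<open>f\<close>, \<open>g\<close> of degree at most
  \<open>d\<close>, the law of \<open>cos \<theta>\<close> under \<open>\<xi>\<close> integrates \<open>f g\<close> exactly as the uniform distribution on
  \<open>[-1, 1]\<close> does. Let \<open>c = |x\<^sub>1\<^sup>*|\<close>, a zero of \<open>P\<^sub>d\<^sub>+\<^sub>1\<close> because Legendre polynomials are even or
  odd, and write \<open>P\<^sub>d\<^sub>+\<^sub>1(x) = (x\<^sup>2 - c\<^sup>2) r(x)\<close> with \<open>deg r = d - 1\<close>. For \<open>0 \<le> a < c\<close>,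
  orthogonality of \<open>P\<^sub>d\<^sub>+\<^sub>1\<close> to \<open>r\<close> gives \<open>\<integral>\<^sub>-\<^sub>1\<^sup>1 (x\<^sup>2 - a\<^sup>2) r\<^sup>2 = (c\<^sup>2 - a\<^sup>2) \<integral>\<^sub>-\<^sub>1\<^sup>1 r\<^sup>2 > 0\<close>,
  whereas on the band \<open>[z, \<pi> - z]\<close> one has \<open>|cos \<theta>| \<le> cos z < c\<close>, which makes the
  corresponding \<open>\<xi>\<close>-integral non-positive for \<open>a = cos z\<close>.\<close>

definition poly_integral :: "real poly \<Rightarrow> real" where
  "poly_integral p = integral {-1..1} (poly p)"

lemma continuous_on_poly_fun: "continuous_on A (poly p)" for p :: "real poly"
  using continuous_on_poly[OF continuous_on_id] .

lemma poly_integrable_on: "poly p integrable_on {a..b}" for p :: "real poly"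
  by (intro integrable_continuous_interval continuous_on_poly_fun)

lemma poly_integral_add: "poly_integral (p + q) = poly_integral p + poly_integral q"
proof -
  have "poly (p + q) = (\<lambda>x. poly p x + poly q x)" by auto
  then show ?thesis unfolding poly_integral_def by (simp add: integral_add poly_integrable_on)
qed

lemma poly_integral_smult: "poly_integral (smult a p) = a * poly_integral p"
proof -
  have "poly (smult a p) = (\<lambda>x. a * poly p x)" by auto
  then show ?thesis unfolding poly_integral_def by simp
qed

lemma poly_integral_0 [simp]: "poly_integral 0 = 0"
  using poly_integral_smult[of 0 0] by simp

lemma poly_integral_diff: "poly_integral (p - q) = poly_integral p - poly_integral q"
  using poly_integral_add[of "p - q" q] by simp

lemma poly_integral_pderiv: "poly_integral (pderiv p) = poly p 1 - poly p (-1)"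
proof -
  have "(poly (pderiv p) has_integral poly p 1 - poly p (-1)) {-1..1}"
    by (intro fundamental_theorem_of_calculus)
       (auto simp: has_real_derivative_iff_has_vector_derivative[symmetric]
             intro: DERIV_subset[OF poly_DERIV])
  then show ?thesis unfolding poly_integral_def by (rule integral_unique)
qed

lemma poly_integral_by_parts:
  "poly_integral (pderiv p * q) =
     poly p 1 * poly q 1 - poly p (-1) * poly q (-1) - poly_integral (p * pderiv q)"
  using poly_integral_pderiv[of "p * q"]
  by (simp add: pderiv_mult poly_integral_add algebra_simps)

lemma poly_integral_pos:
  assumes nonneg: "\<And>x. x \<in> {-1..1} \<Longrightarrow> 0 \<le> poly p x" and "p \<noteq> 0"
  shows "0 < poly_integral p"
proof -
  have "poly_integral p \<noteq> 0"
  proof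
    assume "poly_integral p = 0"
    then have "{-1..1} \<subseteq> {x. poly p x = 0}"
      using integral_eq_0_iff[of "-1" 1 "poly p"] nonneg
      by (auto simp: poly_integral_def continuous_on_poly_fun)
    moreover have "infinite {-1..1::real}" by (simp add: infinite_Icc)
    ultimately show False using poly_roots_finite[OF \<open>p \<noteq> 0\<close>] finite_subset by blast
  qed
  moreover have "0 \<le> poly_integral p"
    unfolding poly_integral_def using nonneg by (intro integral_nonneg poly_integrable_on) auto
  ultimately show ?thesis by simp
qed

definition rodrigues_poly :: "nat \<Rightarrow> real poly" where
  "rodrigues_poly n = [:-1, 0, 1:] ^ n"

lemma legendre_rodrigues:
  "legendre n = smult (1 / (2 ^ n * fact n)) ((pderiv ^^ n) (rodrigues_poly n))"
  unfolding legendre_def rodrigues_poly_def ..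

lemma pderiv_power_dvd:
  fixes p q :: "'a::idom poly"
  assumes "q ^ Suc m dvd p"
  shows "q ^ m dvd pderiv p"
proof -
  obtain g where p: "p = q ^ Suc m * g" using assms by (elim dvdE)
  have "pderiv p = q ^ m * (smult (of_nat (Suc m)) (pderiv q * g) + q * pderiv g)"
    unfolding p pderiv_mult pderiv_power_Suc by (simp add: algebra_simps)
  then show ?thesis by simp
qed

lemma higher_pderiv_power_dvd:
  fixes p q :: "'a::idom poly"
  assumes "q ^ m dvd p" "k \<le> m"
  shows "q ^ (m - k) dvd (pderiv ^^ k) p"
  using assms(2)
proof (induction k)
  case 0
  then show ?case using assms(1) by simp
next
  case (Suc k)
  then have "q ^ Suc (m - Suc k) dvd (pderiv ^^ k) p"
    by (simp add: Suc_diff_Suc)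
  then show ?case by (simp add: pderiv_power_dvd)
qed

lemma higher_pderiv_rodrigues_poly_boundary:
  assumes "k < n"
  shows "poly ((pderiv ^^ k) (rodrigues_poly n)) 1 = 0"
    and "poly ((pderiv ^^ k) (rodrigues_poly n)) (-1) = 0"
proof -
  have root: "poly ((pderiv ^^ k) (rodrigues_poly n)) c = 0"
    if "[:-c, 1:] ^ n dvd rodrigues_poly n" for c
  proof -
    have "[:-c, 1:] dvd [:-c, 1:] ^ (n - k)" using assms by (simp add: dvd_power)
    also have "\<dots> dvd (pderiv ^^ k) (rodrigues_poly n)"
      using higher_pderiv_power_dvd[OF that] assms by simp
    finally show ?thesis by (simp add: poly_eq_0_iff_dvd)
  qed
  have factor: "rodrigues_poly n = [:-1, 1:] ^ n * [:1, 1:] ^ n"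
    unfolding rodrigues_poly_def by (simp add: power_mult_distrib[symmetric])
  show "poly ((pderiv ^^ k) (rodrigues_poly n)) 1 = 0"
    by (rule root) (simp add: factor)
  show "poly ((pderiv ^^ k) (rodrigues_poly n)) (-1) = 0"
    by (rule root) (simp add: factor)
qed

lemma rodrigues_poly_by_parts:
  assumes "j \<le> n"
  shows "poly_integral ((pderiv ^^ n) (rodrigues_poly n) * h) =
           (-1) ^ j * poly_integral ((pderiv ^^ (n - j)) (rodrigues_poly n) * (pderiv ^^ j) h)"
  using assms
proof (induction j)
  case 0
  then show ?case by simp
next
  case (Suc j)
  define F where "F = (pderiv ^^ (n - Suc j)) (rodrigues_poly n)"
  have "n - j = Suc (n - Suc j)" using Suc.prems by simp
  then have F: "(pderiv ^^ (n - j)) (rodrigues_poly n) = pderiv F"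
    unfolding F_def by simp
  have "poly F 1 = 0" "poly F (-1) = 0"
    unfolding F_def using higher_pderiv_rodrigues_poly_boundary Suc.prems by auto
  then show ?case
    using Suc poly_integral_by_parts[of F "(pderiv ^^ j) h"] by (simp add: F F_def)
qed

lemma legendre_orthogonal:
  assumes "degree g < n"
  shows "poly_integral (legendre n * g) = 0"
proof -
  have "(pderiv ^^ n) g = 0"
    using assms by (intro poly_eqI) (auto simp: coeff_higher_pderiv intro!: coeff_eq_0)
  then show ?thesis
    using rodrigues_poly_by_parts[of n n g]
    by (simp add: legendre_rodrigues poly_integral_smult mult_smult_left)
qed

lemma degree_rodrigues_poly: "degree (rodrigues_poly n) = 2 * n"
  unfolding rodrigues_poly_def by (simp add: degree_power_eq)

lemma lead_coeff_rodrigues_poly: "coeff (rodrigues_poly n) (2 * n) = 1"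
  using lead_coeff_power[of "[:-1, 0, 1::real:]" n]
  by (simp add: degree_rodrigues_poly[symmetric] rodrigues_poly_def)

lemma legendre_nonzero: "legendre n \<noteq> 0"
proof -
  have "coeff ((pderiv ^^ n) (rodrigues_poly n)) n = pochhammer (real (Suc n)) n"
    by (simp add: coeff_higher_pderiv lead_coeff_rodrigues_poly mult_2[symmetric] add.commute)
  moreover have "pochhammer (real (Suc n)) n > 0" by (intro pochhammer_pos) simp
  ultimately have "coeff (legendre n) n \<noteq> 0" unfolding legendre_rodrigues by simp
  then show ?thesis by auto
qed

lemma degree_legendre: "degree (legendre n) = n"
  unfolding legendre_rodrigues by (simp add: degree_higher_pderiv degree_rodrigues_poly)

lemma higher_pderiv_reflect:
  "(pderiv ^^ k) (p \<circ>\<^sub>p [:0, -1:]) = smult ((-1) ^ k) ((pderiv ^^ k) p \<circ>\<^sub>p [:0, -1::real:])"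
proof (induction k)
  case 0
  then show ?case by simp
next
  case (Suc k)
  then have "(pderiv ^^ Suc k) (p \<circ>\<^sub>p [:0, -1:]) =
      smult ((-1) ^ k) (((pderiv ^^ Suc k) p \<circ>\<^sub>p [:0, -1:]) * [:-1:])"
    by (simp add: pderiv_smult pderiv_pcompose pderiv_pCons)
  then show ?case by (simp add: mult.commute[of _ "[:-1:]"])
qed

lemma legendre_minus: "poly (legendre n) (-x) = (-1) ^ n * poly (legendre n) x"
proof -
  have even: "rodrigues_poly n \<circ>\<^sub>p [:0, -1:] = rodrigues_poly n"
    by (simp add: poly_eq_poly_eq_iff[symmetric] poly_pcompose rodrigues_poly_def fun_eq_iff)
  have "poly ((pderiv ^^ n) (rodrigues_poly n \<circ>\<^sub>p [:0, -1:])) x =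
      (-1) ^ n * poly ((pderiv ^^ n) (rodrigues_poly n)) (-x)"
    by (simp add: higher_pderiv_reflect poly_pcompose)
  then show ?thesis
    unfolding legendre_rodrigues even by (simp add: power_mult_distrib[symmetric])
qed

lemma higher_pderiv_rodrigues_poly_top: "(pderiv ^^ (2 * n)) (rodrigues_poly n) = [:fact (2 * n):]"
proof (rule poly_eqI)
  fix i
  show "coeff ((pderiv ^^ (2 * n)) (rodrigues_poly n)) i = coeff [:fact (2 * n):] i"
  proof (cases i)
    case 0
    then show ?thesis
      by (simp add: coeff_higher_pderiv lead_coeff_rodrigues_poly pochhammer_fact)
  next
    case (Suc j)
    then have "coeff (rodrigues_poly n) (i + 2 * n) = 0"
      by (intro coeff_eq_0) (simp add: degree_rodrigues_poly)
    then show ?thesis using Suc by (simp add: coeff_higher_pderiv)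
  qed
qed

lemma poly_integral_one_minus_square_power_Suc:
  "(2 * real n + 3) * poly_integral ([:1, 0, -1:] ^ Suc n) =
     (2 * real n + 2) * poly_integral ([:1, 0, -1:] ^ n)"
proof -
  define V :: "real poly" where "V = [:1, 0, -1:]"
  have "pderiv V = [:0, -2:]" by (simp add: V_def pderiv_pCons)
  then have "[:0, 1:] * pderiv (V ^ Suc n) = [:0, 1:] * (smult (of_nat (Suc n)) (V ^ n) * [:0, -2:])"
    by (simp only: pderiv_power_Suc)
  also have "\<dots> = smult (2 * real n + 2) (V ^ Suc n - V ^ n)"
    by (simp add: V_def poly_eq_poly_eq_iff[symmetric] fun_eq_iff algebra_simps)
  finally have "[:0, 1:] * pderiv (V ^ Suc n) = smult (2 * real n + 2) (V ^ Suc n - V ^ n)" .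
  moreover have "poly V 1 = 0" "poly V (-1) = 0" by (simp_all add: V_def)
  ultimately have "poly_integral (V ^ Suc n) =
      - ((2 * real n + 2) * (poly_integral (V ^ Suc n) - poly_integral (V ^ n)))"
    using poly_integral_by_parts[of "[:0, 1:]" "V ^ Suc n"]
    by (simp add: pderiv_pCons poly_integral_smult poly_integral_diff)
  then show ?thesis unfolding V_def by (simp add: algebra_simps)
qed

lemma poly_integral_one_minus_square_power:
  "fact (2 * n + 1) * poly_integral ([:1, 0, -1:] ^ n) = 2 * (2 ^ n * fact n) ^ 2"
proof (induction n)
  case 0
  have "poly (1 :: real poly) = (\<lambda>x. 1)" by auto
  then show ?case by (simp add: poly_integral_def)
next
  case (Suc n)
  have "fact (2 * Suc n + 1) * poly_integral ([:1, 0, -1:] ^ Suc n) =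
      (2 * real n + 2) * fact (2 * n + 1) * ((2 * real n + 3) * poly_integral ([:1, 0, -1:] ^ Suc n))"
    by (simp add: algebra_simps)
  also have "\<dots> = (2 * real n + 2) ^ 2 * (fact (2 * n + 1) * poly_integral ([:1, 0, -1:] ^ n))"
    by (simp only: poly_integral_one_minus_square_power_Suc) (simp add: power2_eq_square)
  also have "\<dots> = 2 * (2 ^ Suc n * fact (Suc n)) ^ 2"
    by (simp only: Suc.IH) (simp add: algebra_simps power2_eq_square)
  finally show ?case .
qed

lemma legendre_norm: "poly_integral (legendre n * legendre n) = 2 / (2 * real n + 1)"
proof -
  define D where "D = (pderiv ^^ n) (rodrigues_poly n)"
  have "(pderiv ^^ n) D = [:fact (2 * n):]"
    using higher_pderiv_rodrigues_poly_top[of n] by (simp add: D_def mult_2 funpow_add)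
  moreover have "rodrigues_poly n = smult ((-1) ^ n) ([:1, 0, -1:] ^ n)"
    by (simp add: rodrigues_poly_def poly_eq_poly_eq_iff[symmetric] fun_eq_iff
        power_mult_distrib[symmetric])
  ultimately have "poly_integral (D * D) = fact (2 * n) * poly_integral ([:1, 0, -1:] ^ n)"
    using rodrigues_poly_by_parts[of n n D]
    by (simp add: D_def poly_integral_smult power_mult_distrib[symmetric] mult.commute[of _ "[:_:]"])
  also have "\<dots> = 2 * (2 ^ n * fact n) ^ 2 / (2 * real n + 1)"
    using poly_integral_one_minus_square_power[of n] by (simp add: field_simps)
  finally show ?thesis
    by (simp add: legendre_rodrigues D_def[symmetric] poly_integral_smult power2_eq_square)
qed

lemma legendre_product_integral:
  "poly_integral (legendre k * legendre l) = (if k = l then 2 / (2 * real k + 1) else 0)"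
proof (cases k l rule: linorder_cases)
  case less
  then show ?thesis
    using legendre_orthogonal[of "legendre k" l] by (simp add: degree_legendre mult.commute)
next
  case greater
  then show ?thesis using legendre_orthogonal[of "legendre l" k] by (simp add: degree_legendre)
qed (simp add: legendre_norm)

lemma legendre_zero_ge:
  assumes "poly (legendre n) x = 0"
  shows "-1 \<le> x"
proof (rule ccontr)
  assume "\<not> -1 \<le> x"
  obtain g where P: "legendre n = [:-x, 1:] * g"
    using assms by (auto simp: poly_eq_0_iff_dvd elim: dvdE)
  have "g \<noteq> 0" using P legendre_nonzero by auto
  then have "degree (legendre n) = degree [:-x, 1:] + degree g"
    unfolding P by (intro degree_mult_eq) auto
  then have "degree g < n" by (simp add: degree_legendre)
  then have "poly_integral ([:-x, 1:] * g * g) = 0"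
    using legendre_orthogonal[of g n] P by simp
  moreover have "0 < poly_integral ([:-x, 1:] * g * g)"
  proof (rule poly_integral_pos)
    fix t :: real assume "t \<in> {-1..1}"
    then have "0 \<le> (t - x) * (poly g t)\<^sup>2" using \<open>\<not> -1 \<le> x\<close> by simp
    then show "0 \<le> poly ([:-x, 1:] * g * g) t" by (simp add: power2_eq_square algebra_simps)
  qed (use \<open>g \<noteq> 0\<close> in \<open>metis mult_eq_0_iff pCons_eq_0_iff zero_neq_one\<close>)
  ultimately show False by simp
qed

lemma legendre_zero_abs_le: "poly (legendre n) x = 0 \<Longrightarrow> \<bar>x\<bar> \<le> 1"
  using legendre_zero_ge[of n x] legendre_zero_ge[of n "-x"] legendre_minus[of n x] by auto

lemma legendre_has_zero:
  assumes "1 \<le> n"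
  shows "\<exists>x. poly (legendre n) x = 0"
proof (rule ccontr)
  assume no_zero: "\<nexists>x. poly (legendre n) x = 0"
  define q where "q = smult (poly (legendre n) (-1)) (legendre n)"
  have "poly_integral q = 0"
    using legendre_orthogonal[of 1 n] assms by (simp add: q_def poly_integral_smult)
  moreover have "0 < poly_integral q"
  proof (rule poly_integral_pos)
    fix x :: real assume x: "x \<in> {-1..1}"
    show "0 \<le> poly q x"
    proof (rule ccontr)
      assume "\<not> 0 \<le> poly q x"
      then have "x \<noteq> -1" "poly (legendre n) (-1) * poly (legendre n) x < 0"
        by (auto simp: q_def)
      then show False using poly_IVT[of "-1" x] x no_zero by auto
    qed
  qed (use no_zero legendre_nonzero in \<open>simp add: q_def\<close>)
  ultimately show False by simp
qed

lemma poly_smallest_zero: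
  fixes p :: "real poly"
  assumes "p \<noteq> 0" "poly p x = 0"
  shows "poly p (smallest_zero p) = 0"
  using Min_in[OF poly_roots_finite[OF assms(1)]] assms(2) by (auto simp: smallest_zero_def)

lemma legendre_abs_smallest_zero:
  assumes "1 \<le> n"
  shows "poly (legendre n) \<bar>smallest_zero (legendre n)\<bar> = 0"
    and "\<bar>smallest_zero (legendre n)\<bar> \<le> 1"
proof -
  have "poly (legendre n) (smallest_zero (legendre n)) = 0"
    using legendre_has_zero[OF assms] poly_smallest_zero[OF legendre_nonzero] by blast
  then show "poly (legendre n) \<bar>smallest_zero (legendre n)\<bar> = 0"
    and "\<bar>smallest_zero (legendre n)\<bar> \<le> 1"
    using legendre_minus legendre_zero_abs_le by (auto simp: abs_if)
qed

lemma degree_graded_basis_induct: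
  fixes q :: "nat \<Rightarrow> 'a::field poly"
  assumes degree_q: "\<And>k. degree (q k) = k" and q_nonzero: "\<And>k. q k \<noteq> 0"
    and zero: "P 0" and combination: "\<And>a p p'. P p \<Longrightarrow> P p' \<Longrightarrow> P (smult a p + p')"
    and basis: "\<And>k. k \<le> d \<Longrightarrow> P (q k)"
    and "degree f \<le> d"
  shows "P f"
  using \<open>degree f \<le> d\<close> basis
proof (induction d arbitrary: f)
  case 0
  obtain c where "f = [:c:]" using "0.prems"(1) by (auto elim: degree_eq_zeroE)
  moreover obtain b where "q 0 = [:b:]" using degree_q[of 0] by (elim degree_eq_zeroE)
  moreover have "b \<noteq> 0" using q_nonzero[of 0] \<open>q 0 = [:b:]\<close> by simp
  ultimately have "f = smult (c / b) (q 0) + 0" by simp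
  then show ?case using combination[OF "0.prems"(2) zero] by simp
next
  case (Suc d)
  define a where "a = coeff f (Suc d) / lead_coeff (q (Suc d))"
  define f' where "f' = f - smult a (q (Suc d))"
  have "degree f' \<le> Suc d"
    unfolding f'_def using Suc.prems(1) degree_q by (intro degree_diff_le) auto
  moreover have "coeff (q (Suc d)) (Suc d) \<noteq> 0"
    using q_nonzero degree_q by (metis leading_coeff_0_iff)
  then have "coeff f' (Suc d) = 0" by (simp add: f'_def a_def degree_q)
  ultimately have "degree f' \<le> d"
    using eq_zero_or_degree_less by fastforce
  then have "P f'" using Suc by simp
  then have "P (smult a (q (Suc d)) + f')" using Suc.prems(2) combination by simp
  then show ?case by (simp add: f'_def)
qed

lemma linear_form_vanishes_on_products:
  fixes q :: "nat \<Rightarrow> 'a::field poly" and F :: "'a poly \<Rightarrow> 'a"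
  assumes degree_q: "\<And>k. degree (q k) = k" and q_nonzero: "\<And>k. q k \<noteq> 0"
    and linear: "\<And>a p p'. F (smult a p + p') = a * F p + F p'"
    and basis: "\<And>k l. k \<le> d \<Longrightarrow> l \<le> d \<Longrightarrow> F (q k * q l) = 0"
    and "degree f \<le> d" "degree g \<le> d"
  shows "F (f * g) = 0"
proof -
  have "F 0 = F 0 + F 0" using linear[of 1 0 0] by simp
  then have F_0: "F 0 = 0" by (metis add_cancel_right_right)
  note induct = degree_graded_basis_induct[OF degree_q q_nonzero]
  have left: "F (f * q l) = 0" if "l \<le> d" for l
  proof (rule induct[where P = "\<lambda>f. F (f * q l) = 0", OF _ _ _ \<open>degree f \<le> d\<close>])
    show "F (0 * q l) = 0" by (simp add: F_0)
    show "F ((smult a p + p') * q l) = 0" if "F (p * q l) = 0" "F (p' * q l) = 0" for a p p'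
      using that linear[of a "p * q l" "p' * q l"] by (simp add: distrib_right)
    show "F (q k * q l) = 0" if "k \<le> d" for k using basis that \<open>l \<le> d\<close> by simp
  qed
  show ?thesis
  proof (rule induct[where P = "\<lambda>g. F (f * g) = 0", OF _ _ _ \<open>degree g \<le> d\<close>])
    show "F (f * 0) = 0" by (simp add: F_0)
    show "F (f * (smult a p + p')) = 0" if "F (f * p) = 0" "F (f * p') = 0" for a p p'
      using that linear[of a "f * p" "f * p'"] by (simp add: distrib_left)
  qed (use left in simp)
qed

lemma integrable_poly_bounded:
  fixes X :: "'a \<Rightarrow> real"
  assumes "finite_measure M" "X \<in> borel_measurable M" "AE \<omega> in M. \<bar>X \<omega>\<bar> \<le> b"
  shows "integrable M (\<lambda>\<omega>. poly p (X \<omega>))"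
proof -
  have "bounded (poly p ` {-b..b})"
    by (intro compact_imp_bounded compact_continuous_image continuous_on_poly_fun compact_Icc)
  then obtain B where B: "\<forall>x\<in>{-b..b}. \<bar>poly p x\<bar> \<le> B"
    by (auto simp: bounded_iff)
  show ?thesis
  proof (rule finite_measure.integrable_const_bound[OF assms(1)])
    show "AE \<omega> in M. norm (poly p (X \<omega>)) \<le> B"
      using assms(3) by eventually_elim (use B in \<open>auto simp: abs_le_iff\<close>)
    show "(\<lambda>\<omega>. poly p (X \<omega>)) \<in> borel_measurable M"
      using borel_measurable_continuous_on[OF continuous_on_poly_fun assms(2)] .
  qed
qed

lemma legendre_moments_imp_uniform_moments:
  fixes X :: "'a \<Rightarrow> real"
  assumes integrable: "\<And>p. integrable M (\<lambda>\<omega>. poly p (X \<omega>))"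
    and legendre: "\<And>k l. k \<le> d \<Longrightarrow> l \<le> d \<Longrightarrow>
      (\<integral>\<omega>. poly (legendre k * legendre l) (X \<omega>) \<partial>M) = poly_integral (legendre k * legendre l) / 2"
    and "degree f \<le> d" "degree g \<le> d"
  shows "(\<integral>\<omega>. poly (f * g) (X \<omega>) \<partial>M) = poly_integral (f * g) / 2"
proof -
  define F where "F p = (\<integral>\<omega>. poly p (X \<omega>) \<partial>M) - poly_integral p / 2" for p
  have "F (f * g) = 0"
  proof (rule linear_form_vanishes_on_products[where q = legendre and d = d])
    show "F (smult a p + p') = a * F p + F p'" for a p p'
      using integrable[of p] integrable[of p']
      by (simp add: F_def poly_integral_add poly_integral_smult algebra_simps)
    show "F (legendre k * legendre l) = 0" if "k \<le> d" "l \<le> d" for k l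
      using legendre[OF that] by (simp add: F_def)
  qed (simp_all add: degree_legendre legendre_nonzero assms)
  then show ?thesis by (simp add: F_def)
qed

lemma legendre_factor_zero_pair:
  assumes "poly (legendre n) c = 0" "c \<noteq> 0"
  obtains r where "legendre n = [:-(c\<^sup>2), 0, 1:] * r" "r \<noteq> 0" "degree r + 2 = n"
proof -
  have "poly (legendre n) (-c) = 0" using assms(1) legendre_minus[of n c] by simp
  then obtain g where g: "legendre n = [:c, 1:] * g"
    by (auto simp: poly_eq_0_iff_dvd elim: dvdE)
  have "poly g c = 0" using assms by (simp add: g)
  then obtain r where r: "g = [:-c, 1:] * r"
    by (auto simp: poly_eq_0_iff_dvd elim: dvdE)
  have "[:c, 1:] * [:-c, 1:] = [:-(c\<^sup>2), 0, 1:]" by (simp add: power2_eq_square)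
  then have P: "legendre n = [:-(c\<^sup>2), 0, 1:] * r"
    unfolding g r by (simp only: mult.assoc[symmetric])
  have "r \<noteq> 0" using legendre_nonzero[of n] P by auto
  then have "degree (legendre n) = 2 + degree r"
    unfolding P by (subst degree_mult_eq) simp_all
  then have "degree r + 2 = n" by (simp add: degree_legendre)
  with P \<open>r \<noteq> 0\<close> show thesis by (rule that)
qed

lemma legendre_cofactor_integral_gap:
  assumes P: "legendre n = [:-(c\<^sup>2), 0, 1:] * r" and "r \<noteq> 0" "degree r + 2 = n" "a\<^sup>2 < c\<^sup>2"
  shows "a\<^sup>2 * poly_integral (r * r) < poly_integral ([:0, 1:] * r * ([:0, 1:] * r))"
proof -
  have identity: "[:0, 1:] * r * ([:0, 1:] * r) - smult (a\<^sup>2) (r * r) =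
      legendre n * r + smult (c\<^sup>2 - a\<^sup>2) (r * r)"
    by (simp add: P poly_eq_poly_eq_iff[symmetric] fun_eq_iff power2_eq_square algebra_simps)
  have "poly_integral (legendre n * r) = 0"
    using legendre_orthogonal[of r n] assms(3) by simp
  then have "poly_integral ([:0, 1:] * r * ([:0, 1:] * r)) - a\<^sup>2 * poly_integral (r * r) =
      (c\<^sup>2 - a\<^sup>2) * poly_integral (r * r)"
    using arg_cong[OF identity, of poly_integral]
    by (simp add: poly_integral_diff poly_integral_add poly_integral_smult)
  moreover have "0 < poly_integral (r * r)"
    using \<open>r \<noteq> 0\<close> by (intro poly_integral_pos) auto
  ultimately show ?thesis using \<open>a\<^sup>2 < c\<^sup>2\<close> by (simp add: algebra_simps)
qed

lemma uniform_moments_not_AE_abs_le: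
  fixes X :: "'a \<Rightarrow> real"
  assumes integrable: "\<And>p. integrable M (\<lambda>\<omega>. poly p (X \<omega>))"
    and moments: "\<And>f g. degree f \<le> d \<Longrightarrow> degree g \<le> d \<Longrightarrow>
      (\<integral>\<omega>. poly (f * g) (X \<omega>) \<partial>M) = poly_integral (f * g) / 2"
    and zero: "poly (legendre (Suc d)) c = 0" and "0 \<le> a" "a < c"
  shows "\<not> (AE \<omega> in M. \<bar>X \<omega>\<bar> \<le> a)"
proof
  assume concentrated: "AE \<omega> in M. \<bar>X \<omega>\<bar> \<le> a"
  have "c \<noteq> 0" using \<open>0 \<le> a\<close> \<open>a < c\<close> by simp
  obtain r where P: "legendre (Suc d) = [:-(c\<^sup>2), 0, 1:] * r" "r \<noteq> 0" "degree r + 2 = Suc d"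
    by (rule legendre_factor_zero_pair[OF zero \<open>c \<noteq> 0\<close>])
  define xr where "xr = [:0, 1:] * r"
  have degree: "degree r \<le> d" "degree xr \<le> d"
    using P(3) degree_mult_le[of "[:0, 1:]" r] by (simp_all add: xr_def)
  have "a\<^sup>2 < c\<^sup>2" using \<open>0 \<le> a\<close> \<open>a < c\<close> by (simp add: power_strict_mono)
  then have gap: "a\<^sup>2 * poly_integral (r * r) < poly_integral (xr * xr)"
    unfolding xr_def by (rule legendre_cofactor_integral_gap[OF P])
  have "(\<integral>\<omega>. poly (xr * xr) (X \<omega>) \<partial>M) \<le> (\<integral>\<omega>. a\<^sup>2 * poly (r * r) (X \<omega>) \<partial>M)"
  proof (rule integral_mono_AE)
    show "AE \<omega> in M. poly (xr * xr) (X \<omega>) \<le> a\<^sup>2 * poly (r * r) (X \<omega>)"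
      using concentrated
    proof eventually_elim
      fix \<omega> assume "\<bar>X \<omega>\<bar> \<le> a"
      then have "(X \<omega>)\<^sup>2 \<le> a\<^sup>2"
        using \<open>0 \<le> a\<close> by (simp add: abs_le_square_iff[symmetric])
      then have "(X \<omega>)\<^sup>2 * (poly r (X \<omega>))\<^sup>2 \<le> a\<^sup>2 * (poly r (X \<omega>))\<^sup>2"
        by (intro mult_right_mono) simp_all
      then show "poly (xr * xr) (X \<omega>) \<le> a\<^sup>2 * poly (r * r) (X \<omega>)"
        by (simp add: xr_def power2_eq_square algebra_simps)
    qed
    show "integrable M (\<lambda>\<omega>. poly (xr * xr) (X \<omega>))" by (rule integrable)
    show "integrable M (\<lambda>\<omega>. a\<^sup>2 * poly (r * r) (X \<omega>))" by (intro integrable_mult_right integrable)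
  qed
  then have "poly_integral (xr * xr) / 2 \<le> a\<^sup>2 * poly_integral (r * r) / 2"
    by (simp only: moments[OF degree(2) degree(2)] moments[OF degree(1) degree(1)]
        integral_mult_right_zero times_divide_eq_right)
  with gap show False by linarith
qed

lemma design_on_AE:
  assumes "design_on R \<xi>" "R \<in> sets borel"
  shows "AE \<omega> in \<xi>. \<omega> \<in> R"
proof (rule AE_I')
  have "sets \<xi> = sets borel" "emeasure \<xi> (UNIV - R) = 0"
    using assms(1) by (auto simp: design_on_def)
  then show "UNIV - R \<in> null_sets \<xi>" using assms(2) by (auto intro: null_setsI)
  show "{\<omega> \<in> space \<xi>. \<omega> \<notin> R} \<subseteq> UNIV - R" by auto
qed

lemma integrable_poly_cos_fst:
  assumes "design_on R \<xi>"
  shows "integrable \<xi> (\<lambda>\<omega>. poly p (cos (fst \<omega>)))"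
proof (rule integrable_poly_bounded)
  have "sets \<xi> = sets borel" and "prob_space \<xi>" using assms by (auto simp: design_on_def)
  then show "finite_measure \<xi>" by (simp add: prob_space_def)
  show "(\<lambda>\<omega>. cos (fst \<omega>)) \<in> borel_measurable \<xi>"
    unfolding measurable_cong_sets[OF \<open>sets \<xi> = sets borel\<close> refl]
    by (intro borel_measurable_continuous_onI continuous_intros)
  show "AE \<omega> in \<xi>. \<bar>cos (fst \<omega>)\<bar> \<le> 1" by simp
qed

lemma info_matrix_zonal:
  "info_matrix \<xi> (k, 0) (l, 0) =
     sqrt (2 * real k + 1) * sqrt (2 * real l + 1) *
       (\<integral>\<omega>. poly (legendre k * legendre l) (cos (fst \<omega>)) \<partial>\<xi>)"
proof -
  have "(\<lambda>\<omega>. sph_harm k 0 \<omega> * sph_harm l 0 \<omega>) = (\<lambda>\<omega>. sqrt (2 * real k + 1) * sqrt (2 * real l + 1) *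
      poly (legendre k * legendre l) (cos (fst \<omega>)))"
    by (simp add: sph_harm_def fun_eq_iff)
  then show ?thesis by (simp add: info_matrix_def)
qed

lemma identity_info_matrix_moments:
  assumes design: "design_on R \<xi>"
    and identity: "\<forall>i\<in>sh_index d. \<forall>j\<in>sh_index d. info_matrix \<xi> i j = (if i = j then 1 else 0)"
    and "degree f \<le> d" "degree g \<le> d"
  shows "(\<integral>\<omega>. poly (f * g) (cos (fst \<omega>)) \<partial>\<xi>) = poly_integral (f * g) / 2"
proof (rule legendre_moments_imp_uniform_moments[OF integrable_poly_cos_fst[OF design]])
  fix k l assume "k \<le> d" "l \<le> d"
  then have "info_matrix \<xi> (k, 0) (l, 0) = (if k = l then 1 else 0)"
    using identity by (simp add: sh_index_def)
  then show "(\<integral>\<omega>. poly (legendre k * legendre l) (cos (fst \<omega>)) \<partial>\<xi>) =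
      poly_integral (legendre k * legendre l) / 2"
    unfolding info_matrix_zonal legendre_product_integral
    by (cases "k = l") (auto simp: field_simps)
qed (fact assms)+

lemma abs_cos_le_cos:
  fixes z \<theta> :: real
  assumes "0 \<le> z" "z \<le> \<theta>" "\<theta> \<le> pi - z"
  shows "\<bar>cos \<theta>\<bar> \<le> cos z"
proof -
  have "cos \<theta> \<le> cos z" using assms by (intro cos_monotone_0_pi_le) auto
  moreover have "cos (pi - \<theta>) \<le> cos z" using assms by (intro cos_monotone_0_pi_le) auto
  ultimately show ?thesis by simp
qed

lemma design_on_band_abs_cos_le:
  assumes design: "design_on ({z..pi - z} \<times> {-pi<..pi}) \<xi>" and "0 \<le> z"
  shows "z \<le> pi / 2" and "AE \<omega> in \<xi>. \<bar>cos (fst \<omega>)\<bar> \<le> cos z"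
proof -
  interpret prob_space \<xi> using design by (simp add: design_on_def)
  have "{z..pi - z} \<times> {-pi<..pi} \<in> sets borel"
    unfolding borel_prod[symmetric] by (intro pair_measureI) auto
  then have "AE \<omega> in \<xi>. \<omega> \<in> {z..pi - z} \<times> {-pi<..pi}" by (rule design_on_AE[OF design])
  then have AE: "AE \<omega> in \<xi>. z \<le> pi / 2 \<and> \<bar>cos (fst \<omega>)\<bar> \<le> cos z"
    by eventually_elim (use \<open>0 \<le> z\<close> in \<open>auto intro: abs_cos_le_cos\<close>)
  then show "z \<le> pi / 2" by (metis (mono_tags, lifting) AE_const eventually_mono)
  show "AE \<omega> in \<xi>. \<bar>cos (fst \<omega>)\<bar> \<le> cos z" using AE by (rule eventually_mono) simp
qed

theorem theorem3p6:
  fixes d :: nat and z :: real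
  assumes "d \<ge> 1"
    and "z > arccos \<bar>smallest_zero (legendre (d + 1))\<bar>"
  shows "\<not> (\<exists>\<xi>. design_on ({z..pi - z} \<times> {-pi<..pi}) \<xi> \<and>
              (\<forall>i\<in>sh_index d. \<forall>j\<in>sh_index d.
                  info_matrix \<xi> i j = (if i = j then 1 else 0)))"
proof
  assume "\<exists>\<xi>. design_on ({z..pi - z} \<times> {-pi<..pi}) \<xi> \<and>
              (\<forall>i\<in>sh_index d. \<forall>j\<in>sh_index d. info_matrix \<xi> i j = (if i = j then 1 else 0))"
  then obtain \<xi> where design: "design_on ({z..pi - z} \<times> {-pi<..pi}) \<xi>"
    and identity: "\<forall>i\<in>sh_index d. \<forall>j\<in>sh_index d. info_matrix \<xi> i j = (if i = j then 1 else 0)"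
    by blast
  define c where "c = \<bar>smallest_zero (legendre (Suc d))\<bar>"
  have zero: "poly (legendre (Suc d)) c = 0" "c \<le> 1"
    unfolding c_def by (simp_all add: legendre_abs_smallest_zero)
  have "arccos c < z" "0 \<le> arccos c"
    using assms(2) zero by (auto simp: c_def intro: arccos_lbound)
  then have "0 \<le> z" by simp
  then have "z \<le> pi / 2" and AE: "AE \<omega> in \<xi>. \<bar>cos (fst \<omega>)\<bar> \<le> cos z"
    using design_on_band_abs_cos_le[OF design] by auto
  then have "cos z < cos (arccos c)" "0 \<le> cos z"
    using \<open>arccos c < z\<close> \<open>0 \<le> arccos c\<close> by (auto intro!: cos_monotone_0_pi cos_ge_zero)
  then show False
    using uniform_moments_not_AE_abs_le[OF integrable_poly_cos_fst[OF design]
        identity_info_matrix_moments[OF design identity] zero(1)] AE zero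
    by (simp add: c_def)
qed

end
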